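(* Let $G$ be a finite simple graph and let $\overrightarrow{G}$ be the directed graph obtained by replacing every edge $xy$ of $G$ by the two directed edges $\overrightarrow{xy}$ and $\overrightarrow{yx}$. Let $\mathrm{m}_G=|V(G)|-r(G)-1$. If $G$ has a complete $r$-source, then the $\mathrm{m}_G$-skeleton $\Delta^{(\mathrm{m}_G)}(\overrightarrow{G})$ of $\Delta(\overrightarrow{G})$ is shellable.
   Context: For a finite directed graph $D$, the complex of directed trees $\Delta(D)$ has the directed edges of $D$ as vertices, and its faces are the edge sets of directed forests in $D$ (vertex-disjoint unions of rooted directed trees; equivalently, edge sets in which every vertex has in-degree at most $1$ and there is no directed cycle). The $k$-skeleton $\Delta^{(k)}$ consists of all faces of dimension at most $k$. $N(v)$ is the neighbour set of $v$ in $G$. A set $A\subseteq V(G)$ is strongly independent if it is independent and $N(u)\cap N(v)=\emptyset$ for distinct $u,v\in A$; $r(G)$ is the maximum size of a strongly independent set (and $\mathrm{m}_G$ is the largest $k$ for which the $k$-skeleton of $\Delta(\overrightarrow{G})$ is pure). An inclusion-maximal strongly independent set $A=\{x_1,\ldots,x_r\}$ is a complete $r$-source if $V(G)=A\cup N(x_1)\cup\cdots\cup N(x_r)$. A pure simplicial complex is shellable if its facets admit a linear order $F_1,\ldots,F_k$ such that for all $i<j$ there exist $l<j$ and a vertex $v\in F_j$ with $F_i\cap F_j\subseteq F_l\cap F_j=F_j\setminus\{v\}$. *)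

theory Defs
  imports Main
begin

definition simple_graph :: "'a set \<Rightarrow> ('a \<Rightarrow> 'a \<Rightarrow> bool) \<Rightarrow> bool" where
  "simple_graph V E \<longleftrightarrow> finite V \<and>
     (\<forall>x y. E x y \<longrightarrow> x \<in> V \<and> y \<in> V \<and> x \<noteq> y \<and> E y x)"

text \<open>Arcs of the doubled digraph: every edge xy gives arcs (x,y) and (y,x).\<close>
definition doubled_arcs :: "'a set \<Rightarrow> ('a \<Rightarrow> 'a \<Rightarrow> bool) \<Rightarrow> ('a \<times> 'a) set" where
  "doubled_arcs V E = {(x, y). x \<in> V \<and> y \<in> V \<and> E x y}"

text \<open>Complex of directed trees: edge sets of directed forests
  (in-degree at most one, no directed cycle).\<close>
definition dtree_complex :: "('a \<times> 'a) set \<Rightarrow> ('a \<times> 'a) set set" where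
  "dtree_complex D = {F. F \<subseteq> D \<and> (\<forall>u w v. (u, v) \<in> F \<longrightarrow> (w, v) \<in> F \<longrightarrow> u = w) \<and> acyclic F}"

definition skeleton :: "'b set set \<Rightarrow> int \<Rightarrow> 'b set set" where
  "skeleton K k = {F \<in> K. int (card F) - 1 \<le> k}"

definition facets :: "'b set set \<Rightarrow> 'b set set" where
  "facets K = {F \<in> K. \<forall>G \<in> K. F \<subseteq> G \<longrightarrow> G = F}"

definition pure :: "'b set set \<Rightarrow> bool" where
  "pure K \<longleftrightarrow> (\<exists>d. \<forall>F \<in> facets K. card F = d)"

definition shellable :: "'b set set \<Rightarrow> bool" where
  "shellable K \<longleftrightarrow> pure K \<and>
     (\<exists>fs. distinct fs \<and> set fs = facets K \<and>
        (\<forall>i j. i < j \<and> j < length fs \<longrightarrow>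
           (\<exists>l < j. \<exists>v \<in> fs ! j.
              fs ! i \<inter> fs ! j \<subseteq> fs ! l \<inter> fs ! j \<and> fs ! l \<inter> fs ! j = fs ! j - {v})))"

definition nbhd :: "('a \<Rightarrow> 'a \<Rightarrow> bool) \<Rightarrow> 'a \<Rightarrow> 'a set" where
  "nbhd E v = {u. E v u}"

definition strongly_independent :: "'a set \<Rightarrow> ('a \<Rightarrow> 'a \<Rightarrow> bool) \<Rightarrow> 'a set \<Rightarrow> bool" where
  "strongly_independent V E A \<longleftrightarrow> A \<subseteq> V \<and> (\<forall>u \<in> A. \<forall>v \<in> A. \<not> E u v) \<and>
     (\<forall>u \<in> A. \<forall>v \<in> A. u \<noteq> v \<longrightarrow> nbhd E u \<inter> nbhd E v = {})"

definition strong_indep_number :: "'a set \<Rightarrow> ('a \<Rightarrow> 'a \<Rightarrow> bool) \<Rightarrow> nat" where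
  "strong_indep_number V E = Max {card A | A. strongly_independent V E A}"

definition complete_r_source :: "'a set \<Rightarrow> ('a \<Rightarrow> 'a \<Rightarrow> bool) \<Rightarrow> 'a set \<Rightarrow> bool" where
  "complete_r_source V E A \<longleftrightarrow> strongly_independent V E A \<and>
     (\<forall>B. strongly_independent V E B \<and> A \<subseteq> B \<longrightarrow> B = A) \<and>
     card A = strong_indep_number V E \<and>
     V = A \<union> (\<Union>x \<in> A. nbhd E x)"

definition mG :: "'a set \<Rightarrow> ('a \<Rightarrow> 'a \<Rightarrow> bool) \<Rightarrow> int" where
  "mG V E = int (card V) - int (strong_indep_number V E) - 1"

end

theory Submission
  imports Defs
begin

text \<open>Let A be a complete source: the neighbourhoods of its vertices are disjoint and together
  with A cover V, so V is partitioned into |A| stars. Call the arcs leaving A star arcs. In every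
  directed forest with fewer than |V| - |A| arcs, two of its more than |A| roots lie in the same
  star, and a star arc joining them keeps it a forest; so the facets of the skeleton are exactly
  the forests with |V| - |A| arcs. Number the arcs so that star arcs come first and order facets
  by their binary weight. Given facets F' before F, remove from F the largest arc v of the
  symmetric difference: if v is not a star arc, a star arc re-augments F - {v}; if it is, a
  counting of roots shows that some arc of F' - F re-augments it. Either way one obtains an
  earlier facet meeting F in F - {v}.\<close>

definition in_degree_le_one :: "('v \<times> 'v) set \<Rightarrow> bool" where
  "in_degree_le_one F \<longleftrightarrow> (\<forall>u w v. (u, v) \<in> F \<longrightarrow> (w, v) \<in> F \<longrightarrow> u = w)"

lemma dtree_complex_iff:
  "F \<in> dtree_complex D \<longleftrightarrow> F \<subseteq> D \<and> in_degree_le_one F \<and> acyclic F"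
  unfolding dtree_complex_def in_degree_le_one_def by blast

lemma dtree_complex_downward_closed:
  "F \<in> dtree_complex D \<Longrightarrow> F' \<subseteq> F \<Longrightarrow> F' \<in> dtree_complex D"
  unfolding dtree_complex_iff in_degree_le_one_def using acyclic_subset by blast

lemma insert_dtree_complex:
  assumes "F \<in> dtree_complex D" "(a, b) \<in> D"
    and "\<And>a'. (a', b) \<in> F \<Longrightarrow> a' = a" and "(b, a) \<notin> F\<^sup>*"
  shows "insert (a, b) F \<in> dtree_complex D"
  using assms unfolding dtree_complex_iff in_degree_le_one_def by auto

lemma rtrancl_into_root_eq:
  "(a, b) \<in> P\<^sup>* \<Longrightarrow> b \<notin> Range P \<Longrightarrow> a = b"
  by (erule rtranclE) auto

lemma roots_reaching_same_vertex_eq: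
  assumes "in_degree_le_one P" and "(a, u) \<in> P\<^sup>*" "(b, u) \<in> P\<^sup>*"
    and "a \<notin> Range P" "b \<notin> Range P"
  shows "a = b"
  using assms(2,3,5)
proof (induction arbitrary: b rule: rtrancl_induct)
  case base
  then show ?case using rtrancl_into_root_eq assms(4) by metis
next
  case (step y z)
  from \<open>(b, z) \<in> P\<^sup>*\<close> show ?case
  proof (cases rule: rtranclE)
    case base
    then show ?thesis using step.hyps(2) step.prems(2) by blast
  next
    case (step y')
    then have "y' = y" using assms(1) \<open>(y, z) \<in> P\<close> unfolding in_degree_le_one_def by blast
    then show ?thesis using step.IH step.prems(2) \<open>(b, y') \<in> P\<^sup>*\<close> by blast
  qed
qed

lemma card_roots:
  assumes "finite V" "P \<subseteq> V \<times> V" "in_degree_le_one P"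
  shows "card (V - Range P) = card V - card P"
proof -
  have "finite P" using assms(1,2) finite_subset by blast
  moreover have "inj_on snd P" using assms(3) unfolding in_degree_le_one_def inj_on_def by auto
  ultimately have "card (Range P) = card P" by (simp add: Range_snd card_image)
  moreover have "Range P \<subseteq> V" using assms(2) by blast
  ultimately show ?thesis using assms(1) by (simp add: card_Diff_subset finite_subset)
qed

text \<open>Every tree of the forest P is closed under the arcs of the forest F' taken backwards,
  so by well-foundedness it contains a root of F'; distinct trees give distinct such roots.\<close>
lemma card_roots_le_if_trees_closed:
  assumes "finite V" "P \<subseteq> V \<times> V" "in_degree_le_one P" "finite F'" "acyclic F'"
    and closed: "\<And>a b z. (a, b) \<in> F' \<Longrightarrow> z \<in> V - Range P \<Longrightarrow> (z, b) \<in> P\<^sup>* \<Longrightarrow> (z, a) \<in> P\<^sup>*"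
  shows "card (V - Range P) \<le> card (V - Range F')"
proof -
  have root_below: "\<exists>u. (z, u) \<in> P\<^sup>* \<and> u \<in> V - Range F'" if z: "z \<in> V - Range P" for z
  proof -
    obtain u where u: "(z, u) \<in> P\<^sup>*" and min: "\<And>y. (y, u) \<in> F' \<Longrightarrow> (z, y) \<notin> P\<^sup>*"
      using wfE_min[OF finite_acyclic_wf[OF assms(4,5)], where x = z and Q = "{u. (z, u) \<in> P\<^sup>*}"]
      by auto
    have "u \<notin> Range F'"
    proof
      assume "u \<in> Range F'"
      then obtain y where "(y, u) \<in> F'" by blast
      then show False using min closed[of y u z] z u by blast
    qed
    moreover have "u \<in> V"
      using u z assms(2) by (induction rule: rtrancl_induct) auto
    ultimately show ?thesis using u by blast
  qed
  define g where "g z = (SOME u. (z, u) \<in> P\<^sup>* \<and> u \<in> V - Range F')" for z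
  have g: "(z, g z) \<in> P\<^sup>* \<and> g z \<in> V - Range F'" if "z \<in> V - Range P" for z
    unfolding g_def by (rule someI_ex[OF root_below[OF that]])
  have "inj_on g (V - Range P)"
  proof (rule inj_onI)
    fix z1 z2 assume "z1 \<in> V - Range P" "z2 \<in> V - Range P" "g z1 = g z2"
    then show "z1 = z2"
      using g[of z1] g[of z2] roots_reaching_same_vertex_eq[OF assms(3), of z1 "g z1" z2] by auto
  qed
  then show ?thesis using g assms(1) by (intro card_inj_on_le) auto
qed

lemma sum_power2_less_if_max_of_sym_diff:
  fixes S T :: "nat set"
  assumes "finite S" "finite T" "m \<in> S" "m \<notin> T" "\<forall>x\<in>(S - T) \<union> (T - S). x \<le> m"
  shows "(\<Sum>i\<in>T. (2::nat) ^ i) < (\<Sum>i\<in>S. 2 ^ i)"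
proof -
  define U where "U = {x. m < x}"
  have same_above: "S \<inter> U = T \<inter> U" using assms(5) unfolding U_def by force
  have T_split: "T = (T \<inter> U) \<union> (T \<inter> {0..<m})"
    using assms(4) unfolding U_def by (force simp: not_less le_less)
  have "(\<Sum>i\<in>T. (2::nat) ^ i) = (\<Sum>i\<in>T \<inter> U. 2 ^ i) + (\<Sum>i\<in>T \<inter> {0..<m}. 2 ^ i)"
    by (subst T_split, rule sum.union_disjoint) (use assms(2) U_def in auto)
  also have "(\<Sum>i\<in>T \<inter> {0..<m}. (2::nat) ^ i) \<le> (\<Sum>i\<in>{0..<m}. 2 ^ i)"
    by (rule sum_mono2) auto
  also have "\<dots> = 2 ^ m - 1" by (rule sum_power2)
  finally have T_le: "(\<Sum>i\<in>T. (2::nat) ^ i) \<le> (\<Sum>i\<in>T \<inter> U. 2 ^ i) + (2 ^ m - 1)" by simp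
  have "(\<Sum>i\<in>S \<inter> U. (2::nat) ^ i) + 2 ^ m = (\<Sum>i\<in>S \<inter> U \<union> {m}. 2 ^ i)"
    by (subst sum.union_disjoint) (use assms(1) U_def in auto)
  also have "\<dots> \<le> (\<Sum>i\<in>S. 2 ^ i)"
    by (rule sum_mono2) (use assms in auto)
  finally have "(\<Sum>i\<in>T \<inter> U. (2::nat) ^ i) + 2 ^ m \<le> (\<Sum>i\<in>S. 2 ^ i)"
    using same_above by simp
  moreover have "(0::nat) < 2 ^ m" by simp
  ultimately show ?thesis using T_le by linarith
qed

lemma sum_power2_index_less:
  fixes idx :: "'b \<Rightarrow> nat"
  assumes "inj_on idx D" "finite D" "G \<subseteq> D" "H \<subseteq> D"
    and "v \<in> H" "v \<notin> G" and "\<forall>a\<in>(H - G) \<union> (G - H). idx a \<le> idx v"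
  shows "(\<Sum>a\<in>G. (2::nat) ^ idx a) < (\<Sum>a\<in>H. 2 ^ idx a)"
proof -
  have inj_G: "inj_on idx G" and inj_H: "inj_on idx H"
    using inj_on_subset[OF assms(1)] assms(3,4) by auto
  have "idx v \<notin> idx ` G"
    using assms(1,3,4,5,6) by (auto simp: inj_on_def)
  moreover have "\<forall>x\<in>(idx ` H - idx ` G) \<union> (idx ` G - idx ` H). x \<le> idx v"
    using assms(7) by auto
  moreover have "finite G" "finite H" using assms(2,3,4) finite_subset by auto
  ultimately have "(\<Sum>i\<in>idx ` G. (2::nat) ^ i) < (\<Sum>i\<in>idx ` H. 2 ^ i)"
    using assms(5) by (intro sum_power2_less_if_max_of_sym_diff) auto
  then show ?thesis by (simp add: sum.reindex[OF inj_G] sum.reindex[OF inj_H])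
qed

lemma ex_inj_on_nat_initial_segment:
  assumes "finite D" "S \<subseteq> D"
  shows "\<exists>idx :: 'b \<Rightarrow> nat. inj_on idx D \<and> (\<forall>a\<in>S. \<forall>b\<in>D - S. idx a < idx b)"
proof -
  obtain h0 where h0: "bij_betw h0 S {0..<card S}"
    using ex_bij_betw_finite_nat[OF finite_subset[OF assms(2,1)]] by blast
  obtain h1 where h1: "bij_betw h1 (D - S) {0..<card (D - S)}"
    using ex_bij_betw_finite_nat[OF finite_Diff[OF assms(1)]] by blast
  have h0_less: "h0 a < card S" if "a \<in> S" for a
    using h0 that unfolding bij_betw_def by auto
  define idx where "idx a = (if a \<in> S then h0 a else card S + h1 a)" for a
  have "inj_on idx D"
  proof (rule inj_onI)
    fix a b assume ab: "a \<in> D" "b \<in> D" "idx a = idx b"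
    consider "a \<in> S" "b \<in> S" | "a \<in> S \<longleftrightarrow> b \<notin> S" | "a \<notin> S" "b \<notin> S" by blast
    then show "a = b"
    proof cases
      case 1
      then show ?thesis using ab h0 unfolding idx_def bij_betw_def inj_on_def by auto
    next
      case 2
      then show ?thesis using ab h0_less[of a] h0_less[of b] unfolding idx_def by auto
    next
      case 3
      then show ?thesis using ab h1 unfolding idx_def bij_betw_def inj_on_def by auto
    qed
  qed
  moreover have "\<forall>a\<in>S. \<forall>b\<in>D - S. idx a < idx b"
    using h0_less unfolding idx_def by fastforce
  ultimately show ?thesis by blast
qed

lemma facets_skeleton_eq:
  assumes finite_faces: "\<And>F. F \<in> K \<Longrightarrow> finite F"
    and augment: "\<And>F. F \<in> K \<Longrightarrow> card F < n \<Longrightarrow> \<exists>e. e \<notin> F \<and> insert e F \<in> K"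
  shows "facets (skeleton K (int n - 1)) = {F \<in> K. card F = n}"
proof -
  have skel: "skeleton K (int n - 1) = {F \<in> K. card F \<le> n}"
    unfolding skeleton_def by auto
  show ?thesis
  proof (intro set_eqI iffI)
    fix F assume "F \<in> facets (skeleton K (int n - 1))"
    then have F: "F \<in> K" "card F \<le> n"
      and max: "\<And>G. G \<in> K \<Longrightarrow> card G \<le> n \<Longrightarrow> F \<subseteq> G \<Longrightarrow> G = F"
      unfolding facets_def skel by auto
    have "card F = n"
    proof (rule ccontr)
      assume "card F \<noteq> n"
      then have "card F < n" using F by simp
      then obtain e where e: "e \<notin> F" "insert e F \<in> K" using augment F by blast
      then have "card (insert e F) \<le> n" using \<open>card F < n\<close> finite_faces[OF F(1)] by simp
      then show False using max[OF e(2)] e(1) by blast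
    qed
    then show "F \<in> {F \<in> K. card F = n}" using F by simp
  next
    fix F assume "F \<in> {F \<in> K. card F = n}"
    then have F: "F \<in> K" "card F = n" by auto
    have "G = F" if "G \<in> K" "card G \<le> n" "F \<subseteq> G" for G
      using card_subset_eq[OF finite_faces[OF that(1)] that(3)]
        card_mono[OF finite_faces[OF that(1)] that(3)] that(2) F(2) by simp
    then show "F \<in> facets (skeleton K (int n - 1))"
      unfolding facets_def skel using F by auto
  qed
qed

lemma shellable_if_exchange:
  fixes K :: "'b set set" and w :: "'b set \<Rightarrow> 'c::linorder"
  assumes "finite (facets K)" "pure K"
    and exchange: "\<And>F F'. F \<in> facets K \<Longrightarrow> F' \<in> facets K \<Longrightarrow> F \<noteq> F' \<Longrightarrow> w F' \<le> w F \<Longrightarrow>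
      \<exists>v\<in>F - F'. \<exists>G\<in>facets K. G \<inter> F = F - {v} \<and> w G < w F"
  shows "shellable K"
proof -
  obtain xs where xs: "set xs = facets K" "distinct xs"
    using finite_distinct_list[OF assms(1)] by blast
  define fs where "fs = sort_key w xs"
  have fs: "distinct fs" "set fs = facets K" using xs unfolding fs_def by auto
  have "sorted (map w fs)" unfolding fs_def by simp
  then have mono: "w (fs ! i) \<le> w (fs ! j)" if "i \<le> j" "j < length fs" for i j
    using sorted_nth_mono[of "map w fs" i j] that by simp
  have "\<exists>l<j. \<exists>v\<in>fs ! j. fs ! i \<inter> fs ! j \<subseteq> fs ! l \<inter> fs ! j \<and> fs ! l \<inter> fs ! j = fs ! j - {v}"
    if ij: "i < j" "j < length fs" for i j
  proof -
    have "fs ! j \<in> facets K" "fs ! i \<in> facets K" using ij fs(2) nth_mem by (metis less_trans)+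
    moreover have "fs ! j \<noteq> fs ! i" using nth_eq_iff_index_eq[OF fs(1)] ij by fastforce
    moreover have "w (fs ! i) \<le> w (fs ! j)" using mono[of i j] ij by linarith
    ultimately obtain v G where v: "v \<in> fs ! j - fs ! i" and G: "G \<in> facets K"
      "G \<inter> fs ! j = fs ! j - {v}" "w G < w (fs ! j)"
      using exchange by blast
    obtain l where l: "l < length fs" "fs ! l = G" using G(1) fs(2) by (metis in_set_conv_nth)
    have "l < j"
    proof (rule ccontr)
      assume "\<not> l < j"
      then have "w (fs ! j) \<le> w G" using mono[of j l] l by simp
      then show False using G(3) by simp
    qed
    moreover have "fs ! i \<inter> fs ! j \<subseteq> fs ! l \<inter> fs ! j"
      unfolding l(2) G(2) using v by blast
    ultimately show ?thesis
      using v by (intro exI[of _ l] conjI bexI[of _ v]) (simp_all add: l(2) G(2))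
  qed
  with assms(2) fs show ?thesis unfolding shellable_def by (intro conjI exI[of _ fs]) auto
qed

locale star_cover =
  fixes V :: "'a set" and E :: "'a \<Rightarrow> 'a \<Rightarrow> bool" and A :: "'a set"
  assumes finite_vertices: "finite V"
    and centres_subset: "A \<subseteq> V"
    and dominating: "\<And>y. y \<in> V \<Longrightarrow> \<exists>x\<in>A. x = y \<or> E x y"
    and private_neighbours: "\<And>x x' y. x \<in> A \<Longrightarrow> x' \<in> A \<Longrightarrow> E x y \<Longrightarrow> E x' y \<Longrightarrow> x = x'"
begin

abbreviation arcs :: "('a \<times> 'a) set" where
  "arcs \<equiv> doubled_arcs V E"

definition star_arcs :: "('a \<times> 'a) set" where
  "star_arcs = {(x, y). (x, y) \<in> arcs \<and> x \<in> A}"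

lemma arcs_subset: "arcs \<subseteq> V \<times> V"
  unfolding doubled_arcs_def by auto

lemma finite_arcs: "finite arcs"
  using arcs_subset finite_vertices finite_subset by blast

lemma card_centres_le: "card A \<le> card V"
  using card_mono[OF finite_vertices centres_subset] .

lemma star_arcs_subset: "star_arcs \<subseteq> arcs"
  unfolding star_arcs_def by auto

lemma star_arc_tail_unique: "(a, b) \<in> star_arcs \<Longrightarrow> (a', b) \<in> star_arcs \<Longrightarrow> a = a'"
  unfolding star_arcs_def doubled_arcs_def using private_neighbours by blast

lemma finite_face: "F \<in> dtree_complex arcs \<Longrightarrow> finite F"
  using finite_arcs unfolding dtree_complex_iff by (auto intro: finite_subset)

lemma card_roots_face: "F \<in> dtree_complex arcs \<Longrightarrow> card (V - Range F) = card V - card F"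
  using arcs_subset finite_vertices unfolding dtree_complex_iff by (intro card_roots) auto

text \<open>More than |A| roots are sent to A by a choice of dominating centre, so two of them share a
  centre x; at most one of them lies in the tree of x, and an arc from x to the other one keeps
  the forest acyclic.\<close>
lemma augment_by_star_arc:
  assumes F: "F \<in> dtree_complex arcs" and small: "card F < card V - card A"
  shows "\<exists>e\<in>star_arcs. e \<notin> F \<and> insert e F \<in> dtree_complex arcs"
proof -
  have forest: "in_degree_le_one F" using F unfolding dtree_complex_iff by blast
  define R where "R = V - Range F"
  have "card A < card R" using card_roots_face[OF F] small unfolding R_def by linarith
  define \<sigma> where "\<sigma> y = (SOME x. x \<in> A \<and> (x = y \<or> E x y))" for y
  have \<sigma>: "\<sigma> y \<in> A \<and> (\<sigma> y = y \<or> E (\<sigma> y) y)" if "y \<in> V" for y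
    unfolding \<sigma>_def by (rule someI_ex) (use dominating[OF that] in blast)
  have "\<sigma> ` R \<subseteq> A" using \<sigma> unfolding R_def by blast
  then have "\<not> inj_on \<sigma> R"
    using card_inj_on_le[of \<sigma> R A] finite_subset[OF centres_subset finite_vertices]
      \<open>card A < card R\<close> by linarith
  then obtain y1 y2 where y12: "y1 \<in> R" "y2 \<in> R" "y1 \<noteq> y2" "\<sigma> y1 = \<sigma> y2"
    unfolding inj_on_def by blast
  have "\<not> ((y1, \<sigma> y1) \<in> F\<^sup>* \<and> (y2, \<sigma> y1) \<in> F\<^sup>*)"
    using roots_reaching_same_vertex_eq[OF forest, of y1 "\<sigma> y1" y2] y12 unfolding R_def by blast
  then obtain y where y: "y \<in> R" "(y, \<sigma> y) \<notin> F\<^sup>*"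
    using y12 by metis
  define x where "x = \<sigma> y"
  have "y \<in> V" "y \<notin> Range F" using y(1) unfolding R_def by auto
  then have "x \<in> A" "E x y" using \<sigma>[of y] y(2) unfolding x_def by auto
  then have star: "(x, y) \<in> star_arcs"
    using centres_subset \<open>y \<in> V\<close> unfolding star_arcs_def doubled_arcs_def by auto
  have "insert (x, y) F \<in> dtree_complex arcs"
    using insert_dtree_complex[OF F] star star_arcs_subset \<open>y \<notin> Range F\<close> y(2)
    unfolding x_def by blast
  moreover have "(x, y) \<notin> F" using \<open>y \<notin> Range F\<close> by blast
  ultimately show ?thesis using star by blast
qed

text \<open>If no arc of F' - F can replace v, every tree of F - {v} is closed under F' backwards,
  so F - {v} would have at most as many roots as F', i.e. |A|; but it has |A| + 1.\<close>
lemma exchange_within_star_arcs: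
  assumes F: "F \<in> dtree_complex arcs" "card F = card V - card A"
    and F': "F' \<in> dtree_complex arcs" "card F' = card V - card A"
    and v: "v \<in> F - F'" and diff: "(F - F') \<union> (F' - F) \<subseteq> star_arcs"
  shows "\<exists>e\<in>F' - F. insert e (F - {v}) \<in> dtree_complex arcs"
proof (rule ccontr)
  assume no_exchange: "\<not> ?thesis"
  define P where "P = F - {v}"
  have P: "P \<in> dtree_complex arcs" using dtree_complex_downward_closed[OF F(1)] unfolding P_def by blast
  have forest_P: "in_degree_le_one P" and forest_F': "in_degree_le_one F'" "acyclic F'"
    using P F'(1) unfolding dtree_complex_iff by auto
  have closed: "(z, a) \<in> P\<^sup>*" if ab: "(a, b) \<in> F'" and z: "z \<in> V - Range P" and zb: "(z, b) \<in> P\<^sup>*"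
    for a b z
  proof (cases "(a, b) \<in> F")
    case True
    then have "(a, b) \<in> P" using v ab unfolding P_def by auto
    with z have "z \<noteq> b" by blast
    with zb obtain y where "(z, y) \<in> P\<^sup>*" "(y, b) \<in> P" by (metis rtranclE)
    moreover have "y = a"
      using forest_P \<open>(a, b) \<in> P\<close> \<open>(y, b) \<in> P\<close> unfolding in_degree_le_one_def by blast
    ultimately show ?thesis by simp
  next
    case False
    then have star: "(a, b) \<in> star_arcs" using diff ab by blast
    have "insert (a, b) P \<notin> dtree_complex arcs"
      using no_exchange ab False unfolding P_def by blast
    then consider a' where "(a', b) \<in> P" "a' \<noteq> a" | "(b, a) \<in> P\<^sup>*"
      using insert_dtree_complex[OF P] star star_arcs_subset by blast
    then show ?thesis
    proof cases
      case (1 a')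
      then have "(a', b) \<in> F" unfolding P_def by blast
      show ?thesis
      proof (cases "(a', b) \<in> F'")
        case True
        then show ?thesis using forest_F'(1) ab \<open>a' \<noteq> a\<close> unfolding in_degree_le_one_def by blast
      next
        case False
        then show ?thesis
          using diff \<open>(a', b) \<in> F\<close> star star_arc_tail_unique \<open>a' \<noteq> a\<close> by blast
      qed
    next
      case 2
      then show ?thesis using zb by simp
    qed
  qed
  have "card (V - Range P) \<le> card (V - Range F')"
    using finite_vertices arcs_subset P forest_P finite_face[OF F'(1)] forest_F'(2) closed
    unfolding dtree_complex_iff by (intro card_roots_le_if_trees_closed) auto
  moreover have "card P = card F - 1" "card F \<ge> 1"
    using v finite_face[OF F(1)] unfolding P_def by (auto simp: Suc_le_eq card_gt_0_iff)
  ultimately show False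
    using card_roots_face[OF P] card_roots_face[OF F'(1)] F(2) F'(2) card_centres_le by linarith
qed


lemma exchange_lower_index:
  fixes idx :: "'a \<times> 'a \<Rightarrow> nat"
  assumes idx: "inj_on idx arcs" "\<forall>a\<in>star_arcs. \<forall>b\<in>arcs - star_arcs. idx a < idx b"
    and F: "F \<in> dtree_complex arcs" "card F = card V - card A"
    and F': "F' \<in> dtree_complex arcs" "card F' = card V - card A"
    and v: "v \<in> F - F'" and v_max: "\<forall>a\<in>(F - F') \<union> (F' - F). idx a \<le> idx v"
  shows "\<exists>e. e \<notin> F \<and> insert e (F - {v}) \<in> dtree_complex arcs \<and> idx e < idx v"
proof (cases "v \<in> star_arcs")
  case False
  have "F - {v} \<in> dtree_complex arcs" using dtree_complex_downward_closed[OF F(1)] by blast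
  moreover have "card (F - {v}) < card V - card A"
    using F(2) v finite_face[OF F(1)] by (metis DiffD1 card_Diff1_less)
  ultimately obtain e where e: "e \<in> star_arcs" "e \<notin> F - {v}" "insert e (F - {v}) \<in> dtree_complex arcs"
    using augment_by_star_arc by blast
  have "v \<in> arcs" using F(1) v unfolding dtree_complex_iff by blast
  then have "idx e < idx v" using idx(2) e(1) False by blast
  moreover have "e \<noteq> v" using e(1) False by blast
  ultimately show ?thesis using e by blast
next
  case True
  have "(F - F') \<union> (F' - F) \<subseteq> star_arcs"
  proof
    fix a assume a: "a \<in> (F - F') \<union> (F' - F)"
    then have "a \<in> arcs" using F(1) F'(1) unfolding dtree_complex_iff by blast
    show "a \<in> star_arcs"
    proof (rule ccontr)
      assume "a \<notin> star_arcs"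
      then have "idx v < idx a" using idx(2) True \<open>a \<in> arcs\<close> by blast
      moreover have "idx a \<le> idx v" using v_max a by blast
      ultimately show False by simp
    qed
  qed
  then obtain e where e: "e \<in> F' - F" "insert e (F - {v}) \<in> dtree_complex arcs"
    using exchange_within_star_arcs[OF F F' v] by blast
  have "e \<in> arcs" "v \<in> arcs" using e(1) v F(1) F'(1) unfolding dtree_complex_iff by blast+
  then have "idx e \<noteq> idx v" using idx(1) e(1) v unfolding inj_on_def by blast
  moreover have "idx e \<le> idx v" using v_max e(1) by blast
  ultimately show ?thesis using e by (intro exI[of _ e]) auto
qed

text \<open>The binary weight of a facet orders facets by the largest index where they differ; choosing
  v to carry that index in the symmetric difference, the exchange lowers the weight.\<close>
lemma exchange_lower_weight:
  fixes idx :: "'a \<times> 'a \<Rightarrow> nat"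
  defines "w \<equiv> \<lambda>F. \<Sum>a\<in>F. (2::nat) ^ idx a"
  assumes idx: "inj_on idx arcs" "\<forall>a\<in>star_arcs. \<forall>b\<in>arcs - star_arcs. idx a < idx b"
    and F: "F \<in> dtree_complex arcs" "card F = card V - card A"
    and F': "F' \<in> dtree_complex arcs" "card F' = card V - card A"
    and "F \<noteq> F'" and "w F' \<le> w F"
  shows "\<exists>v\<in>F - F'. \<exists>G. G \<in> dtree_complex arcs \<and> card G = card V - card A \<and>
           G \<inter> F = F - {v} \<and> w G < w F"
proof -
  have sub: "F \<subseteq> arcs" "F' \<subseteq> arcs" using F(1) F'(1) unfolding dtree_complex_iff by blast+
  define S where "S = (F - F') \<union> (F' - F)"
  have "S \<noteq> {}" "finite S" using \<open>F \<noteq> F'\<close> finite_face[OF F(1)] finite_face[OF F'(1)]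
    unfolding S_def by auto
  then obtain v where v: "v \<in> S" "idx v = Max (idx ` S)" using Max_in[of "idx ` S"] by fastforce
  have v_max: "\<forall>a\<in>S. idx a \<le> idx v" using v(2) \<open>finite S\<close> by simp
  have "v \<in> F"
  proof (rule ccontr)
    assume "v \<notin> F"
    then have "w F < w F'"
      unfolding w_def using v v_max sub finite_arcs idx(1) unfolding S_def
      by (intro sum_power2_index_less[of idx arcs]) auto
    with \<open>w F' \<le> w F\<close> show False by simp
  qed
  then have v': "v \<in> F - F'" using v(1) unfolding S_def by blast
  then obtain e where e: "e \<notin> F" "insert e (F - {v}) \<in> dtree_complex arcs" "idx e < idx v"
    using exchange_lower_index[OF idx F F'] v_max unfolding S_def by blast
  define G where "G = insert e (F - {v})"
  have "card G = Suc (card F - 1)" using e(1) v' finite_face[OF F(1)] unfolding G_def by simp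
  moreover have "card F > 0" using v' finite_face[OF F(1)] card_gt_0_iff by blast
  ultimately have "card G = card V - card A" using F(2) by simp
  moreover have "w G < w F"
    unfolding w_def using v' e sub finite_arcs idx(1) unfolding G_def dtree_complex_iff
    by (intro sum_power2_index_less[of idx arcs]) auto
  moreover have "G \<inter> F = F - {v}" using e(1) unfolding G_def by blast
  ultimately show ?thesis using v' e(2) unfolding G_def by blast
qed

theorem shellable_skeleton:
  "shellable (skeleton (dtree_complex arcs) (int (card V - card A) - 1))"
    (is "shellable ?K")
proof -
  let ?n = "card V - card A"
  have facets: "facets ?K = {F \<in> dtree_complex arcs. card F = ?n}"
    using finite_face augment_by_star_arc by (intro facets_skeleton_eq) blast+
  obtain idx :: "'a \<times> 'a \<Rightarrow> nat"
    where idx: "inj_on idx arcs" "\<forall>a\<in>star_arcs. \<forall>b\<in>arcs - star_arcs. idx a < idx b"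
    using ex_inj_on_nat_initial_segment[OF finite_arcs star_arcs_subset] by blast
  define w where "w F = (\<Sum>a\<in>F. (2::nat) ^ idx a)" for F
  have "finite (facets ?K)"
    unfolding facets dtree_complex_iff using finite_arcs by (auto intro: finite_subset[of _ "Pow arcs"])
  moreover have "pure ?K" unfolding pure_def facets by blast
  moreover have "\<exists>v\<in>F - F'. \<exists>G\<in>facets ?K. G \<inter> F = F - {v} \<and> w G < w F"
    if "F \<in> facets ?K" "F' \<in> facets ?K" "F \<noteq> F'" "w F' \<le> w F" for F F'
    using exchange_lower_weight[OF idx, of F F'] that unfolding facets w_def by blast
  ultimately show ?thesis by (rule shellable_if_exchange)
qed

end

lemma complete_r_source_star_cover:
  assumes "simple_graph V E" "complete_r_source V E A"
  shows "star_cover V E A"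
proof
  show "finite V" using assms(1) unfolding simple_graph_def by blast
  have "strongly_independent V E A" and cover: "V = A \<union> (\<Union>x\<in>A. nbhd E x)"
    using assms(2) unfolding complete_r_source_def by blast+
  then show "A \<subseteq> V"
    and "\<And>x x' y. x \<in> A \<Longrightarrow> x' \<in> A \<Longrightarrow> E x y \<Longrightarrow> E x' y \<Longrightarrow> x = x'"
    unfolding strongly_independent_def nbhd_def by blast+
  show "\<exists>x\<in>A. x = y \<or> E x y" if "y \<in> V" for y
    using that cover unfolding nbhd_def by blast
qed

theorem mainTheorem6:
  fixes V :: "'a set" and E :: "'a \<Rightarrow> 'a \<Rightarrow> bool"
  assumes "simple_graph V E"
    and "\<exists>A. complete_r_source V E A"
  shows "shellable (skeleton (dtree_complex (doubled_arcs V E)) (mG V E))"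
proof -
  obtain A where A: "complete_r_source V E A" using assms(2) by blast
  interpret star_cover V E A using complete_r_source_star_cover[OF assms(1) A] .
  have "mG V E = int (card V - card A) - 1"
    using A card_centres_le unfolding mG_def complete_r_source_def by auto
  then show ?thesis using shellable_skeleton by simp
qed

end
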